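(* Let $\beta$ be an action of a finite abelian group $H$ on a $C^*$-algebra $A$, and let $p^\beta=\frac{1}{|H|}\sum_{h\in H}u_h\in M(A\rtimes_\beta H)$. Then there is a $^*$-isomorphism $$\psi\colon A\to p^\beta(A\rtimes_\beta H\rtimes_{\widehat\beta}\widehat H)p^\beta$$ satisfying $\psi(A^H)=p^\beta(A\rtimes_\beta H)p^\beta$; thus the inclusions $A^H\subseteq A$ and $p^\beta(A\rtimes_\beta H)p^\beta\subseteq p^\beta(A\rtimes_\beta H\rtimes_{\widehat\beta}\widehat H)p^\beta$ are isomorphic. Moreover, for each subgroup $L\subseteq H$, $\psi(A^L)=p^\beta(A\rtimes_\beta H\rtimes_{\widehat\beta}L^\perp)p^\beta$.
   Context: $u\colon H\to UM(A\rtimes_\beta H)$ is the canonical unitary representation implementing $\beta$; $p^\beta$ is viewed also as a multiplier of $A\rtimes_\beta H\rtimes_{\widehat\beta}\widehat H$. $\widehat\beta$ is the dual action of $\widehat H$ on $A\rtimes_\beta H$, $\widehat\beta_x(\sum_h a_hu_h)=\sum_h\overline{\langle h,x\rangle}a_hu_h$. $A^L$ denotes the fixed-point algebra of $\beta|_L$, $L^\perp=\{x\in\widehat H:\langle l,x\rangle=1\ \forall l\in L\}$, and $A\rtimes_\beta H\rtimes_{\widehat\beta}L^\perp$ is viewed as a subalgebra of $A\rtimes_\beta H\rtimes_{\widehat\beta}\widehat H$ canonically. Two inclusions $B_1\subseteq A_1$, $B_2\subseteq A_2$ are isomorphic if there is a $^*$-isomorphism $\phi\colon A_1\to A_2$ with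 $\phi(B_1)=B_2$. *)

theory Defs
  imports Complex_Main "HOL-Algebra.Group" "HOL-Library.Function_Algebras"
begin

section \<open>C*-algebras (possibly non-unital), given by a complex scalar multiplication and an involution\<close>

definition cstar_algebra ::
  "('a::{real_normed_algebra,banach} \<Rightarrow> 'a) \<Rightarrow> (complex \<Rightarrow> 'a \<Rightarrow> 'a) \<Rightarrow> bool" where
  "cstar_algebra st sm \<longleftrightarrow>
     (\<forall>c x y. sm c (x + y) = sm c x + sm c y) \<and>
     (\<forall>c d x. sm (c + d) x = sm c x + sm d x) \<and>
     (\<forall>c d x. sm (c * d) x = sm c (sm d x)) \<and>
     (\<forall>r x. sm (complex_of_real r) x = r *\<^sub>R x) \<and>
     (\<forall>c x y. sm c (x * y) = sm c x * y \<and> sm c (x * y) = x * sm c y) \<and>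
     (\<forall>c x. norm (sm c x) = cmod c * norm x) \<and>
     (\<forall>x. st (st x) = x) \<and>
     (\<forall>x y. st (x + y) = st x + st y) \<and>
     (\<forall>c x. st (sm c x) = sm (cnj c) (st x)) \<and>
     (\<forall>x y. st (x * y) = st y * st x) \<and>
     (\<forall>x. norm (st x * x) = (norm x)\<^sup>2)"

definition star_automorphism ::
  "('a::{real_normed_algebra,banach} \<Rightarrow> 'a) \<Rightarrow> (complex \<Rightarrow> 'a \<Rightarrow> 'a) \<Rightarrow> ('a \<Rightarrow> 'a) \<Rightarrow> bool" where
  "star_automorphism st sm \<phi> \<longleftrightarrow> bij \<phi> \<and>
     (\<forall>x y. \<phi> (x + y) = \<phi> x + \<phi> y) \<and>
     (\<forall>x y. \<phi> (x * y) = \<phi> x * \<phi> y) \<and>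
     (\<forall>c x. \<phi> (sm c x) = sm c (\<phi> x)) \<and>
     (\<forall>x. \<phi> (st x) = st (\<phi> x))"

definition group_action_on ::
  "('g, 'm) monoid_scheme \<Rightarrow> ('a::{real_normed_algebra,banach} \<Rightarrow> 'a) \<Rightarrow> (complex \<Rightarrow> 'a \<Rightarrow> 'a)
     \<Rightarrow> ('g \<Rightarrow> 'a \<Rightarrow> 'a) \<Rightarrow> bool" where
  "group_action_on G st sm \<beta> \<longleftrightarrow>
     (\<forall>g\<in>carrier G. star_automorphism st sm (\<beta> g)) \<and>
     \<beta> \<one>\<^bsub>G\<^esub> = id \<and>
     (\<forall>g\<in>carrier G. \<forall>h\<in>carrier G. \<beta> (g \<otimes>\<^bsub>G\<^esub> h) = \<beta> g \<circ> \<beta> h)"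

definition fixed_points :: "('g \<Rightarrow> 'a \<Rightarrow> 'a) \<Rightarrow> 'g set \<Rightarrow> 'a set" where
  "fixed_points \<beta> L = {a. \<forall>l\<in>L. \<beta> l a = a}"

text \<open>Characters of G, normalised to the value 1 outside the carrier.
  The group operations of the dual group are pointwise multiplication and
  complex conjugation, with the trivial character as unit.\<close>
definition characters :: "('g, 'm) monoid_scheme \<Rightarrow> ('g \<Rightarrow> complex) set" where
  "characters G = {\<chi>. (\<forall>g\<in>carrier G. \<forall>h\<in>carrier G. \<chi> (g \<otimes>\<^bsub>G\<^esub> h) = \<chi> g * \<chi> h) \<and>
                      (\<forall>g\<in>carrier G. cmod (\<chi> g) = 1) \<and> (\<forall>g. g \<notin> carrier G \<longrightarrow> \<chi> g = 1)}"

definition char_mult :: "('g \<Rightarrow> complex) \<Rightarrow> ('g \<Rightarrow> complex) \<Rightarrow> ('g \<Rightarrow> complex)" where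
  "char_mult x y = (\<lambda>g. x g * y g)"

definition char_inv :: "('g \<Rightarrow> complex) \<Rightarrow> ('g \<Rightarrow> complex)" where
  "char_inv x = (\<lambda>g. cnj (x g))"

definition char_one :: "'g \<Rightarrow> complex" where
  "char_one = (\<lambda>g. 1)"

definition annihilator :: "('g, 'm) monoid_scheme \<Rightarrow> 'g set \<Rightarrow> ('g \<Rightarrow> complex) set" where
  "annihilator G L = {x \<in> characters G. \<forall>l\<in>L. x l = 1}"

section \<open>Crossed products by finite groups (algebraic = C*-crossed product)\<close>

text \<open>Elements of B \<rtimes> S are functions f : S \<rightarrow> B (zero outside S), f = \<Sum> f(s) u_s.\<close>
definition cp_carrier :: "'s set \<Rightarrow> 'b set \<Rightarrow> ('s \<Rightarrow> 'b::zero) set" where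
  "cp_carrier S B = {f. (\<forall>s\<in>S. f s \<in> B) \<and> (\<forall>s. s \<notin> S \<longrightarrow> f s = 0)}"

text \<open>(a u_g)(b u_h) = a \<alpha>_g(b) u_{gh}.\<close>
definition cp_mult ::
  "'s set \<Rightarrow> ('s \<Rightarrow> 's \<Rightarrow> 's) \<Rightarrow> ('s \<Rightarrow> 's) \<Rightarrow> ('b \<Rightarrow> 'b \<Rightarrow> 'b) \<Rightarrow> ('s \<Rightarrow> 'b \<Rightarrow> 'b)
     \<Rightarrow> ('s \<Rightarrow> 'b::comm_monoid_add) \<Rightarrow> ('s \<Rightarrow> 'b) \<Rightarrow> ('s \<Rightarrow> 'b)" where
  "cp_mult S gm gi bm \<alpha> f k =
     (\<lambda>t. if t \<in> S then (\<Sum>g\<in>S. bm (f g) (\<alpha> g (k (gm (gi g) t)))) else 0)"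

text \<open>(a u_g)^* = \<alpha>_{g^{-1}}(a^* ) u_{g^{-1}}.\<close>
definition cp_star ::
  "'s set \<Rightarrow> ('s \<Rightarrow> 's) \<Rightarrow> ('b \<Rightarrow> 'b) \<Rightarrow> ('s \<Rightarrow> 'b \<Rightarrow> 'b) \<Rightarrow> ('s \<Rightarrow> 'b::zero) \<Rightarrow> ('s \<Rightarrow> 'b)" where
  "cp_star S gi bst \<alpha> f = (\<lambda>t. if t \<in> S then \<alpha> t (bst (f (gi t))) else 0)"

definition cp_scale :: "(complex \<Rightarrow> 'b \<Rightarrow> 'b) \<Rightarrow> complex \<Rightarrow> ('s \<Rightarrow> 'b) \<Rightarrow> ('s \<Rightarrow> 'b)" where
  "cp_scale sm c f = (\<lambda>t. sm c (f t))"

text \<open>The first crossed product A \<rtimes>_\<beta> H (elements 'g \<Rightarrow> 'a).\<close>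
definition CP1 :: "('g, 'm) monoid_scheme \<Rightarrow> ('g \<Rightarrow> 'a::zero) set" where
  "CP1 G = cp_carrier (carrier G) UNIV"

definition mult1 :: "('g, 'm) monoid_scheme \<Rightarrow> ('g \<Rightarrow> 'a \<Rightarrow> 'a)
     \<Rightarrow> ('g \<Rightarrow> 'a::{real_normed_algebra}) \<Rightarrow> ('g \<Rightarrow> 'a) \<Rightarrow> ('g \<Rightarrow> 'a)" where
  "mult1 G \<beta> = cp_mult (carrier G) (mult G) (m_inv G) (*) \<beta>"

definition star1 :: "('g, 'm) monoid_scheme \<Rightarrow> ('a \<Rightarrow> 'a) \<Rightarrow> ('g \<Rightarrow> 'a \<Rightarrow> 'a)
     \<Rightarrow> ('g \<Rightarrow> 'a::zero) \<Rightarrow> ('g \<Rightarrow> 'a)" where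
  "star1 G st \<beta> = cp_star (carrier G) (m_inv G) st \<beta>"

text \<open>Dual action: \<beta>^_x(\<Sum> a_h u_h) = \<Sum> cnj(<h,x>) a_h u_h.\<close>
definition dual_action :: "(complex \<Rightarrow> 'a \<Rightarrow> 'a) \<Rightarrow> ('g \<Rightarrow> complex) \<Rightarrow> ('g \<Rightarrow> 'a) \<Rightarrow> ('g \<Rightarrow> 'a)" where
  "dual_action sm x f = (\<lambda>t. sm (cnj (x t)) (f t))"

text \<open>The double crossed product A \<rtimes>_\<beta> H \<rtimes>_{\<beta>^} H^ (elements ('g\<Rightarrow>complex) \<Rightarrow> 'g \<Rightarrow> 'a).\<close>
definition CP2_over :: "('g, 'm) monoid_scheme \<Rightarrow> ('g \<Rightarrow> complex) set
     \<Rightarrow> (('g \<Rightarrow> complex) \<Rightarrow> 'g \<Rightarrow> 'a::zero) set" where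
  "CP2_over G K = {F \<in> cp_carrier (characters G) (CP1 G). \<forall>x. x \<notin> K \<longrightarrow> F x = 0}"

definition CP2 :: "('g, 'm) monoid_scheme \<Rightarrow> (('g \<Rightarrow> complex) \<Rightarrow> 'g \<Rightarrow> 'a::zero) set" where
  "CP2 G = cp_carrier (characters G) (CP1 G)"

definition mult2 :: "('g, 'm) monoid_scheme \<Rightarrow> (complex \<Rightarrow> 'a \<Rightarrow> 'a) \<Rightarrow> ('g \<Rightarrow> 'a \<Rightarrow> 'a)
     \<Rightarrow> (('g \<Rightarrow> complex) \<Rightarrow> 'g \<Rightarrow> 'a::real_normed_algebra) \<Rightarrow> (('g \<Rightarrow> complex) \<Rightarrow> 'g \<Rightarrow> 'a)
     \<Rightarrow> (('g \<Rightarrow> complex) \<Rightarrow> 'g \<Rightarrow> 'a)" where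
  "mult2 G sm \<beta> = cp_mult (characters G) char_mult char_inv (mult1 G \<beta>) (dual_action sm)"

definition star2 :: "('g, 'm) monoid_scheme \<Rightarrow> ('a \<Rightarrow> 'a) \<Rightarrow> (complex \<Rightarrow> 'a \<Rightarrow> 'a) \<Rightarrow> ('g \<Rightarrow> 'a \<Rightarrow> 'a)
     \<Rightarrow> (('g \<Rightarrow> complex) \<Rightarrow> 'g \<Rightarrow> 'a::zero) \<Rightarrow> (('g \<Rightarrow> complex) \<Rightarrow> 'g \<Rightarrow> 'a)" where
  "star2 G st sm \<beta> = cp_star (characters G) char_inv (star1 G st \<beta>) (dual_action sm)"

definition scale2 :: "(complex \<Rightarrow> 'a \<Rightarrow> 'a) \<Rightarrow> complex \<Rightarrow> (('g \<Rightarrow> complex) \<Rightarrow> 'g \<Rightarrow> 'a)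
     \<Rightarrow> (('g \<Rightarrow> complex) \<Rightarrow> 'g \<Rightarrow> 'a)" where
  "scale2 sm c = cp_scale (cp_scale sm) c"

text \<open>B embeds in B \<rtimes> H^ as elements supported at the unit character (b = b u_e).\<close>
definition embed2 :: "('g \<Rightarrow> 'a) \<Rightarrow> (('g \<Rightarrow> complex) \<Rightarrow> 'g \<Rightarrow> 'a::zero)" where
  "embed2 f = (\<lambda>x. if x = char_one then f else 0)"

section \<open>The projection p^\<beta> = 1/|H| \<Sum>_h u_h \<in> M(A \<rtimes> H) and its action by multiplication\<close>

text \<open>Left multiplication p f on A \<rtimes> H: p(a u_g) = 1/|H| \<Sum>_k \<beta>_k(a) u_{kg}.\<close>
definition pL1 :: "('g, 'm) monoid_scheme \<Rightarrow> (complex \<Rightarrow> 'a \<Rightarrow> 'a) \<Rightarrow> ('g \<Rightarrow> 'a \<Rightarrow> 'a)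
     \<Rightarrow> ('g \<Rightarrow> 'a::comm_monoid_add) \<Rightarrow> ('g \<Rightarrow> 'a)" where
  "pL1 G sm \<beta> f = (\<lambda>t. if t \<in> carrier G then
      (\<Sum>k\<in>carrier G. sm (1 / of_nat (card (carrier G))) (\<beta> k (f (inv\<^bsub>G\<^esub> k \<otimes>\<^bsub>G\<^esub> t)))) else 0)"

text \<open>Right multiplication of f \<in> A \<rtimes> H by the multiplier \<Sum>_k c_k u_k (c_k scalars).\<close>
definition rmul_scalars :: "('g, 'm) monoid_scheme \<Rightarrow> (complex \<Rightarrow> 'a \<Rightarrow> 'a) \<Rightarrow> ('g \<Rightarrow> complex)
     \<Rightarrow> ('g \<Rightarrow> 'a::comm_monoid_add) \<Rightarrow> ('g \<Rightarrow> 'a)" where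
  "rmul_scalars G sm c f = (\<lambda>t. if t \<in> carrier G then
      (\<Sum>k\<in>carrier G. sm (c k) (f (t \<otimes>\<^bsub>G\<^esub> inv\<^bsub>G\<^esub> k))) else 0)"

definition pR1 :: "('g, 'm) monoid_scheme \<Rightarrow> (complex \<Rightarrow> 'a \<Rightarrow> 'a)
     \<Rightarrow> ('g \<Rightarrow> 'a::comm_monoid_add) \<Rightarrow> ('g \<Rightarrow> 'a)" where
  "pR1 G sm = rmul_scalars G sm (\<lambda>k. 1 / of_nat (card (carrier G)))"

text \<open>p viewed as a multiplier of the double crossed product:
  p (b u_x) = (p b) u_x and (b u_x) p = b \<beta>^_x(p) u_x, where
  \<beta>^_x(p) = 1/|H| \<Sum>_k cnj(<k,x>) u_k.\<close>
definition pL2 :: "('g, 'm) monoid_scheme \<Rightarrow> (complex \<Rightarrow> 'a \<Rightarrow> 'a) \<Rightarrow> ('g \<Rightarrow> 'a \<Rightarrow> 'a)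
     \<Rightarrow> (('g \<Rightarrow> complex) \<Rightarrow> 'g \<Rightarrow> 'a::comm_monoid_add) \<Rightarrow> (('g \<Rightarrow> complex) \<Rightarrow> 'g \<Rightarrow> 'a)" where
  "pL2 G sm \<beta> F = (\<lambda>x. pL1 G sm \<beta> (F x))"

definition pR2 :: "('g, 'm) monoid_scheme \<Rightarrow> (complex \<Rightarrow> 'a \<Rightarrow> 'a)
     \<Rightarrow> (('g \<Rightarrow> complex) \<Rightarrow> 'g \<Rightarrow> 'a::comm_monoid_add) \<Rightarrow> (('g \<Rightarrow> complex) \<Rightarrow> 'g \<Rightarrow> 'a)" where
  "pR2 G sm F = (\<lambda>x. rmul_scalars G sm (\<lambda>k. cnj (x k) / of_nat (card (carrier G))) (F x))"

definition corner1 :: "('g, 'm) monoid_scheme \<Rightarrow> (complex \<Rightarrow> 'a \<Rightarrow> 'a) \<Rightarrow> ('g \<Rightarrow> 'a \<Rightarrow> 'a)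
     \<Rightarrow> ('g \<Rightarrow> 'a::comm_monoid_add) set" where
  "corner1 G sm \<beta> = (\<lambda>f. pL1 G sm \<beta> (pR1 G sm f)) ` CP1 G"

definition corner2 :: "('g, 'm) monoid_scheme \<Rightarrow> (complex \<Rightarrow> 'a \<Rightarrow> 'a) \<Rightarrow> ('g \<Rightarrow> 'a \<Rightarrow> 'a)
     \<Rightarrow> ('g \<Rightarrow> complex) set \<Rightarrow> (('g \<Rightarrow> complex) \<Rightarrow> 'g \<Rightarrow> 'a::comm_monoid_add) set" where
  "corner2 G sm \<beta> K = (\<lambda>F. pL2 G sm \<beta> (pR2 G sm F)) ` CP2_over G K"

definition star_iso_onto :: "('g, 'm) monoid_scheme \<Rightarrow> ('a::{real_normed_algebra,banach} \<Rightarrow> 'a)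
     \<Rightarrow> (complex \<Rightarrow> 'a \<Rightarrow> 'a) \<Rightarrow> ('g \<Rightarrow> 'a \<Rightarrow> 'a)
     \<Rightarrow> ('a \<Rightarrow> ('g \<Rightarrow> complex) \<Rightarrow> 'g \<Rightarrow> 'a) \<Rightarrow> (('g \<Rightarrow> complex) \<Rightarrow> 'g \<Rightarrow> 'a) set \<Rightarrow> bool" where
  "star_iso_onto G st sm \<beta> \<psi> C \<longleftrightarrow> bij_betw \<psi> UNIV C \<and>
     (\<forall>a b. \<psi> (a + b) = \<psi> a + \<psi> b) \<and>
     (\<forall>c a. \<psi> (sm c a) = scale2 sm c (\<psi> a)) \<and>
     (\<forall>a b. \<psi> (a * b) = mult2 G sm \<beta> (\<psi> a) (\<psi> b)) \<and>
     (\<forall>a. \<psi> (st a) = star2 G st sm \<beta> (\<psi> a))"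

end

(*
  The isomorphism is a Fourier transform along H. For a character x of H put
  E_x(a) = sum_k x(k) beta_k(a). Then beta_l E_x(a) = conj(x l) E_x(a), the E_x are orthogonal
  idempotents up to the factor |H|, and sum_x E_x(a) = |H| a. This is where both orthogonality
  relations for characters enter; the second one needs enough characters to separate the points
  of H, which we get by extending characters from subgroups one element at a time. Define
  psi(a) = |H|^-2 sum_(x,t) conj(x t) E_x(a) u_t u_x. The orthogonality of the E_x makes psi a
  *-homomorphism, and psi is injective because a is recovered from the E_x(a). A direct
  computation shows that the compression by p of a general element has the same shape with
  E_x(b_x) in place of E_x(a), for suitable b_x. Since E_x(a) = 0 whenever a is fixed by L and
  x is not in the annihilator of L, the image of the fixed points of L is exactly the compression
  of the part of the double crossed product supported on the annihilator of L.
*)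

theory Submission
  imports Defs "HOL-Algebra.Multiplicative_Group"
begin

section \<open>Characters of finite abelian groups\<close>

definition character_on :: "('g, 'm) monoid_scheme \<Rightarrow> 'g set \<Rightarrow> ('g \<Rightarrow> complex) \<Rightarrow> bool" where
  "character_on G H \<chi> \<longleftrightarrow>
     (\<forall>x\<in>H. \<forall>y\<in>H. \<chi> (x \<otimes>\<^bsub>G\<^esub> y) = \<chi> x * \<chi> y) \<and> (\<forall>x\<in>H. cmod (\<chi> x) = 1)"

lemma exists_unimodular_root:
  assumes "cmod c = 1" and "0 < n"
  obtains \<omega> :: complex where "\<omega> ^ n = c" and "cmod \<omega> = 1"
proof -
  have "card {z::complex. z ^ n = c} = n"
    using assms by (intro card_nth_roots) auto
  then have "{z::complex. z ^ n = c} \<noteq> {}"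
    using \<open>0 < n\<close> by (metis card.empty less_irrefl)
  then obtain \<omega> :: complex where \<omega>: "\<omega> ^ n = c"
    by blast
  then have "cmod \<omega> ^ n = 1 ^ n"
    using assms(1) by (simp add: norm_power[symmetric])
  then have "cmod \<omega> = 1"
    by (rule power_eq_imp_eq_base) (use \<open>0 < n\<close> in auto)
  with \<omega> show thesis by (rule that)
qed

lemma exists_nontrivial_root_of_unity:
  assumes "2 \<le> n"
  obtains \<omega> :: complex where "\<omega> ^ n = 1" and "cmod \<omega> = 1" and "\<omega> \<noteq> 1"
proof -
  have "card {z::complex. z ^ n = 1} = n"
    using assms by (intro card_roots_unity_eq) auto
  have "\<not> {z::complex. z ^ n = 1} \<subseteq> {1}"
  proof
    assume "{z::complex. z ^ n = 1} \<subseteq> {1}"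
    then have "card {z::complex. z ^ n = 1} \<le> card {1::complex}"
      by (rule card_mono[rotated]) simp
    with \<open>card {z::complex. z ^ n = 1} = n\<close> assms show False by simp
  qed
  then obtain \<omega> :: complex where \<omega>: "\<omega> ^ n = 1" "\<omega> \<noteq> 1"
    by blast
  moreover have "cmod \<omega> = 1"
    using power_eq_1_iff[OF \<omega>(1)] assms by simp
  ultimately show thesis using that by blast
qed

context group
begin

lemma character_on_one:
  assumes "character_on G H \<chi>" and "subgroup H G"
  shows "\<chi> \<one> = 1"
proof -
  have "\<one> \<in> H" using subgroup.one_closed[OF assms(2)] .
  then have "\<chi> \<one> = \<chi> \<one> * \<chi> \<one>" and "cmod (\<chi> \<one>) = 1"
    using assms(1) unfolding character_on_def by (metis l_one one_closed)+
  then show ?thesis by (metis mult_cancel_right1 norm_zero zero_neq_one)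
qed

lemma character_on_inv:
  assumes "character_on G H \<chi>" and "subgroup H G" and "x \<in> H"
  shows "\<chi> (inv x) = inverse (\<chi> x)"
proof -
  have x: "x \<in> carrier G" using subgroup.mem_carrier[OF assms(2,3)] .
  have "inv x \<in> H" using subgroup.m_inv_closed[OF assms(2,3)] .
  then have "\<chi> (inv x \<otimes> x) = \<chi> (inv x) * \<chi> x"
    using assms(1,3) unfolding character_on_def by blast
  then have "\<chi> x * \<chi> (inv x) = 1"
    using character_on_one[OF assms(1,2)] x by (simp add: mult.commute)
  then show ?thesis by (rule inverse_unique[symmetric])
qed

lemma character_on_nat_pow:
  assumes "character_on G H \<chi>" and "subgroup H G" and "x \<in> H"
  shows "\<chi> (x [^] (k::nat)) = \<chi> x ^ k"
proof (induction k)
  case 0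
  then show ?case using character_on_one[OF assms(1,2)] by simp
next
  case (Suc k)
  have "x [^] k \<in> H"
    using subgroup_int_pow_closed[OF assms(2,3), of "int k"] by (simp add: int_pow_int)
  then show ?case
    using Suc assms(1,3) unfolding character_on_def by (simp add: mult.commute)
qed

lemma character_on_int_pow:
  assumes "character_on G H \<chi>" and "subgroup H G" and "x \<in> H"
  shows "\<chi> (x [^] (k::int)) = \<chi> x powi k"
proof (cases "k \<ge> 0")
  case True
  then obtain m where "k = int m" using nonneg_eq_int by blast
  then show ?thesis using character_on_nat_pow[OF assms] by (simp add: int_pow_int)
next
  case False
  then obtain m where m: "k = - int m" by (metis minus_minus nonneg_eq_int neg_0_le_iff_le linorder_linear)
  have "x [^] m \<in> H"
    using subgroup_int_pow_closed[OF assms(2,3), of "int m"] by (simp add: int_pow_int)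
  then show ?thesis
    using m character_on_nat_pow[OF assms] character_on_inv[OF assms(1,2)]
      subgroup.mem_carrier[OF assms(2,3)]
    by (simp add: int_pow_neg_int power_int_minus)
qed

lemma exists_least_pow_in_subgroup:
  assumes "finite (carrier G)" and "subgroup H G" and "g \<in> carrier G"
  obtains d :: nat where "0 < d" and "g [^] d \<in> H" and "\<And>e. 0 < e \<Longrightarrow> e < d \<Longrightarrow> g [^] e \<notin> H"
proof -
  have ex: "\<exists>d::nat. 0 < d \<and> g [^] d \<in> H"
    using pow_order_eq_1[OF assms(3)] subgroup.one_closed[OF assms(2)] assms(1)
      order_gt_0_iff_finite by auto
  show thesis
  proof (rule that)
    let ?d = "LEAST d::nat. 0 < d \<and> g [^] d \<in> H"
    show "0 < ?d" and "g [^] ?d \<in> H" using LeastI_ex[OF ex] by auto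
    show "g [^] e \<notin> H" if "0 < e" and "e < ?d" for e
      using not_less_Least[OF \<open>e < ?d\<close>] that(1) by blast
  qed
qed

lemma int_pow_in_subgroup_dvd:
  assumes H: "subgroup H G" and g: "g \<in> carrier G"
    and d: "0 < d" "g [^] d \<in> H" "\<And>e. 0 < e \<Longrightarrow> e < d \<Longrightarrow> g [^] e \<notin> H"
    and k: "g [^] (k::int) \<in> H"
  shows "int d dvd k"
proof -
  define q where "q = k div int d"
  define r where "r = k mod int d"
  have gd: "g [^] int d \<in> H" using d(2) by (simp add: int_pow_int)
  have "g [^] k = g [^] (int d * q + r)"
    unfolding q_def r_def by simp
  also have "\<dots> = (g [^] int d) [^] q \<otimes> g [^] r"
    using g by (simp add: int_pow_mult int_pow_pow)
  finally have "g [^] k = (g [^] int d) [^] q \<otimes> g [^] r" .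
  then have "g [^] r = inv ((g [^] int d) [^] q) \<otimes> g [^] k"
    using g by (simp add: m_assoc[symmetric])
  then have "g [^] r \<in> H"
    using subgroup.m_closed[OF H subgroup.m_inv_closed[OF H subgroup_int_pow_closed[OF H gd]] k]
    by simp
  moreover have r: "0 \<le> r" "r < int d"
    using d(1) unfolding r_def by auto
  ultimately have "g [^] nat r \<in> H"
    by (metis int_pow_int nat_0_le)
  then have "r = 0"
    using d(3)[of "nat r"] r by linarith
  then show ?thesis unfolding r_def by presburger
qed

lemma character_on_int_pow_via_root:
  assumes H: "subgroup H G" and \<chi>: "character_on G H \<chi>" and g: "g \<in> carrier G"
    and d: "0 < d" "g [^] d \<in> H" "\<And>e. 0 < e \<Longrightarrow> e < d \<Longrightarrow> g [^] e \<notin> H"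
    and \<omega>: "\<omega> ^ d = \<chi> (g [^] d)"
    and k: "g [^] (k::int) \<in> H"
  shows "\<chi> (g [^] k) = \<omega> powi k"
proof -
  have "int d dvd k"
    using H g d(1) d(2) d(3) k by (rule int_pow_in_subgroup_dvd)
  then obtain q where q: "k = int d * q" by (elim dvdE)
  have gd: "g [^] int d \<in> H" using d(2) by (simp add: int_pow_int)
  have "\<chi> (g [^] k) = \<chi> ((g [^] int d) [^] q)"
    using g q by (simp add: int_pow_pow)
  also have "\<dots> = (\<omega> powi int d) powi q"
    using character_on_int_pow[OF \<chi> H gd] \<omega> by (simp add: int_pow_int)
  also have "\<dots> = \<omega> powi k"
    using q by (simp add: power_int_mult)
  finally show ?thesis .
qed

lemma character_mult: "\<chi> \<in> characters G \<Longrightarrow> g \<in> carrier G \<Longrightarrow> h \<in> carrier G \<Longrightarrow> \<chi> (g \<otimes> h) = \<chi> g * \<chi> h"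
  unfolding characters_def by blast

lemma character_outside: "\<chi> \<in> characters G \<Longrightarrow> g \<notin> carrier G \<Longrightarrow> \<chi> g = 1"
  unfolding characters_def by blast

lemma character_norm: "\<chi> \<in> characters G \<Longrightarrow> cmod (\<chi> g) = 1"
  unfolding characters_def by (cases "g \<in> carrier G") auto

lemma character_mult_cnj: "\<chi> \<in> characters G \<Longrightarrow> \<chi> g * cnj (\<chi> g) = 1"
  using complex_norm_square[of "\<chi> g"] character_norm[of \<chi> g] by simp

lemma character_cnj_mult: "\<chi> \<in> characters G \<Longrightarrow> cnj (\<chi> g) * \<chi> g = 1"
  using character_mult_cnj[of \<chi> g] by (simp add: mult.commute)

lemma character_on_carrier: "\<chi> \<in> characters G \<Longrightarrow> character_on G (carrier G) \<chi>"
  unfolding characters_def character_on_def by blast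

lemma character_one: "\<chi> \<in> characters G \<Longrightarrow> \<chi> \<one> = 1"
  using character_on_one[OF character_on_carrier subgroup_self] .

lemma character_inv:
  assumes "\<chi> \<in> characters G" and "g \<in> carrier G"
  shows "\<chi> (inv g) = cnj (\<chi> g)"
proof -
  have "\<chi> (inv g) = inverse (\<chi> g)"
    using character_on_inv[OF character_on_carrier[OF assms(1)] subgroup_self assms(2)] .
  also have "\<dots> = cnj (\<chi> g)"
    using character_mult_cnj[OF assms(1)] by (rule inverse_unique)
  finally show ?thesis .
qed

lemma character_inv_mult:
  assumes "\<chi> \<in> characters G" and "m \<in> carrier G" and "u \<in> carrier G"
  shows "\<chi> (inv m \<otimes> u) = cnj (\<chi> m) * \<chi> u"
  using character_mult[OF assms(1) _ assms(3), of "inv m"] character_inv[OF assms(1,2)] assms(2)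
  by simp

lemma char_one_in_characters: "char_one \<in> characters G"
  unfolding characters_def char_one_def by simp

lemma char_mult_in_characters:
  "\<chi> \<in> characters G \<Longrightarrow> \<chi>' \<in> characters G \<Longrightarrow> char_mult \<chi> \<chi>' \<in> characters G"
  unfolding char_mult_def characters_def by (auto simp: norm_mult)

lemma char_inv_in_characters: "\<chi> \<in> characters G \<Longrightarrow> char_inv \<chi> \<in> characters G"
  unfolding char_inv_def characters_def by auto

lemma char_mult_char_inv_cancel_left:
  "\<chi> \<in> characters G \<Longrightarrow> char_mult (char_inv \<chi>) (char_mult \<chi> \<chi>') = \<chi>'"
  unfolding char_mult_def char_inv_def
  by (simp add: mult.assoc[symmetric] character_cnj_mult)

lemma char_mult_char_inv_cancel_right:
  "\<chi> \<in> characters G \<Longrightarrow> char_mult \<chi> (char_mult (char_inv \<chi>) \<chi>') = \<chi>'"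
  unfolding char_mult_def char_inv_def
  by (simp add: mult.assoc[symmetric] character_mult_cnj)

lemma finite_characters:
  assumes fin: "finite (carrier G)"
  shows "finite (characters G)"
proof -
  define R where "R = {z::complex. z ^ order G = 1}"
  have "finite R"
    unfolding R_def using fin order_gt_0_iff_finite by (intro finite_roots_unity) auto
  then have "finite ((\<lambda>f g. if g \<in> carrier G then f g else 1) ` (carrier G \<rightarrow>\<^sub>E R))"
    using fin by (intro finite_imageI finite_PiE)
  moreover have "characters G \<subseteq> (\<lambda>f g. if g \<in> carrier G then f g else 1) ` (carrier G \<rightarrow>\<^sub>E R)"
  proof
    fix \<chi> assume \<chi>: "\<chi> \<in> characters G"
    have "\<chi> g ^ order G = 1" if "g \<in> carrier G" for g
    proof -
      have "\<chi> g ^ order G = \<chi> (g [^] order G)"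
        using character_on_nat_pow[OF character_on_carrier[OF \<chi>] subgroup_self that] by simp
      then show ?thesis using pow_order_eq_1[OF that] character_one[OF \<chi>] by simp
    qed
    then have "restrict \<chi> (carrier G) \<in> carrier G \<rightarrow>\<^sub>E R" unfolding R_def by auto
    moreover have "\<chi> = (\<lambda>g. if g \<in> carrier G then restrict \<chi> (carrier G) g else 1)"
      using character_outside[OF \<chi>] by auto
    ultimately show "\<chi> \<in> (\<lambda>f g. if g \<in> carrier G then f g else 1) ` (carrier G \<rightarrow>\<^sub>E R)" by blast
  qed
  ultimately show ?thesis by (rule finite_subset[rotated])
qed

lemma sum_character_mult_cnj:
  assumes \<chi>: "\<chi> \<in> characters G" and \<chi>': "\<chi>' \<in> characters G"
  shows "(\<Sum>k\<in>carrier G. \<chi> k * cnj (\<chi>' k)) = (if \<chi> = \<chi>' then of_nat (order G) else 0)"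
proof (cases "\<chi> = \<chi>'")
  case True
  then show ?thesis using character_mult_cnj[OF \<chi>'] by (simp add: order_def)
next
  case False
  have "\<exists>k0\<in>carrier G. \<chi> k0 \<noteq> \<chi>' k0"
  proof (rule ccontr)
    assume "\<not> (\<exists>k0\<in>carrier G. \<chi> k0 \<noteq> \<chi>' k0)"
    then have "\<chi> = \<chi>'"
      using character_outside[OF \<chi>] character_outside[OF \<chi>'] by (intro ext) (metis (full_types))
    with False show False ..
  qed
  then obtain k0 where k0: "k0 \<in> carrier G" "\<chi> k0 \<noteq> \<chi>' k0" ..
  define z where "z k = \<chi> k * cnj (\<chi>' k)" for k
  have "\<chi> k0 = z k0 * \<chi>' k0"
    using character_cnj_mult[OF \<chi>', of k0] unfolding z_def by (simp add: mult.assoc)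
  then have "z k0 \<noteq> 1" using k0(2) by auto
  have "(\<Sum>k\<in>carrier G. z (k0 \<otimes> k)) = (\<Sum>k\<in>carrier G. z k)"
    by (rule sum.reindex_bij_witness[of _ "\<lambda>k. inv k0 \<otimes> k" "\<lambda>k. k0 \<otimes> k"])
       (use k0(1) in \<open>auto simp: m_assoc[symmetric]\<close>)
  moreover have "z (k0 \<otimes> k) = z k0 * z k" if "k \<in> carrier G" for k
    unfolding z_def using character_mult[OF \<chi> k0(1) that] character_mult[OF \<chi>' k0(1) that] by simp
  ultimately have "z k0 * (\<Sum>k\<in>carrier G. z k) = (\<Sum>k\<in>carrier G. z k)"
    by (simp add: sum_distrib_left)
  then have "(\<Sum>k\<in>carrier G. z k) = 0" using \<open>z k0 \<noteq> 1\<close> by (metis mult_cancel_right2)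
  then show ?thesis using False unfolding z_def by simp
qed

lemma mult_inv_eq_one_iff:
  "k \<in> carrier G \<Longrightarrow> j \<in> carrier G \<Longrightarrow> k \<otimes> inv j = \<one> \<longleftrightarrow> k = j"
  by (metis inv_closed inv_equality inv_inv r_inv)

end

definition adjoin :: "('g, 'm) monoid_scheme \<Rightarrow> 'g set \<Rightarrow> 'g \<Rightarrow> 'g set" where
  "adjoin G H g = {h \<otimes>\<^bsub>G\<^esub> g [^]\<^bsub>G\<^esub> (i::int) | h i. h \<in> H}"

text \<open>Only meaningful on \<^term>\<open>adjoin G H g\<close>, and well defined there only when \<omega> is compatible
  with \<chi> on the powers of g that lie in H (\<open>character_adjoin_well_defined\<close>).\<close>
definition extend_character ::
  "('g, 'm) monoid_scheme \<Rightarrow> 'g set \<Rightarrow> ('g \<Rightarrow> complex) \<Rightarrow> 'g \<Rightarrow> complex \<Rightarrow> 'g \<Rightarrow> complex" where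
  "extend_character G H \<chi> g \<omega> y =
     (SOME v. \<exists>h (i::int). h \<in> H \<and> y = h \<otimes>\<^bsub>G\<^esub> g [^]\<^bsub>G\<^esub> i \<and> v = \<chi> h * \<omega> powi i)"

context comm_group
begin

lemma subgroup_adjoin:
  assumes H: "subgroup H G" and g: "g \<in> carrier G"
  shows "subgroup (adjoin G H g) G"
proof -
  have Hc: "H \<subseteq> carrier G" using subgroup.subset[OF H] .
  have mult: "(h \<otimes> g [^] i) \<otimes> (h' \<otimes> g [^] j) = (h \<otimes> h') \<otimes> g [^] (i + j)"
    if "h \<in> H" "h' \<in> H" for h h' and i j :: int
  proof -
    have "h \<in> carrier G" "h' \<in> carrier G" using that Hc by auto
    then show ?thesis using g by (simp add: int_pow_mult m_ac)
  qed
  show ?thesis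
  proof (rule subgroupI)
    show "adjoin G H g \<subseteq> carrier G" unfolding adjoin_def using Hc g by auto
    show "adjoin G H g \<noteq> {}" unfolding adjoin_def using subgroup.one_closed[OF H] by blast
    show "inv a \<in> adjoin G H g" if "a \<in> adjoin G H g" for a
    proof -
      obtain h i where a: "a = h \<otimes> g [^] (i::int)" "h \<in> H"
        using \<open>a \<in> adjoin G H g\<close> unfolding adjoin_def by blast
      have "inv a = inv h \<otimes> g [^] (-i)" using a Hc g by (auto simp: inv_mult int_pow_neg)
      then show ?thesis unfolding adjoin_def using subgroup.m_inv_closed[OF H a(2)] by blast
    qed
    show "a \<otimes> b \<in> adjoin G H g" if ab: "a \<in> adjoin G H g" "b \<in> adjoin G H g" for a b
    proof -
      obtain h i h' j where "a = h \<otimes> g [^] (i::int)" "h \<in> H" "b = h' \<otimes> g [^] (j::int)" "h' \<in> H"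
        using ab unfolding adjoin_def by blast
      then show ?thesis
        using mult subgroup.m_closed[OF H] unfolding adjoin_def by blast
    qed
  qed
qed

lemma subset_adjoin:
  assumes "subgroup H G"
  shows "H \<subseteq> adjoin G H g"
proof
  fix h assume "h \<in> H"
  moreover have "h = h \<otimes> g [^] (0::int)" using \<open>h \<in> H\<close> subgroup.mem_carrier[OF assms] by simp
  ultimately show "h \<in> adjoin G H g" unfolding adjoin_def by blast
qed

lemma mem_adjoin:
  assumes "subgroup H G" and "g \<in> carrier G"
  shows "g \<in> adjoin G H g"
proof -
  have "g = \<one> \<otimes> g [^] (1::int)" using assms(2) by simp
  then show ?thesis unfolding adjoin_def using subgroup.one_closed[OF assms(1)] by blast
qed

lemma character_adjoin_well_defined:
  assumes H: "subgroup H G" and \<chi>: "character_on G H \<chi>" and g: "g \<in> carrier G"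
    and compat: "\<And>k::int. g [^] k \<in> H \<Longrightarrow> \<chi> (g [^] k) = \<omega> powi k" and "\<omega> \<noteq> 0"
    and h: "h \<in> H" "h' \<in> H" and eq: "h \<otimes> g [^] i = h' \<otimes> g [^] j"
  shows "\<chi> h * \<omega> powi i = \<chi> h' * \<omega> powi j"
proof -
  have hc: "h \<in> carrier G" "h' \<in> carrier G" using h subgroup.mem_carrier[OF H] by auto
  have "g [^] (i - j) = inv h \<otimes> h'"
  proof -
    have "g [^] i = inv h \<otimes> (h \<otimes> g [^] i)" using hc g by (simp add: m_assoc[symmetric])
    also have "\<dots> = inv h \<otimes> (h' \<otimes> g [^] j)" using eq by simp
    finally have "g [^] i = inv h \<otimes> (h' \<otimes> g [^] j)" .
    then show ?thesis using hc g by (simp add: int_pow_diff m_assoc)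
  qed
  moreover have ih: "inv h \<in> H" using subgroup.m_inv_closed[OF H h(1)] .
  ultimately have "\<omega> powi (i - j) = \<chi> (inv h) * \<chi> h'"
    using compat[of "i - j"] subgroup.m_closed[OF H ih h(2)] \<chi> h(2)
    unfolding character_on_def by auto
  moreover have "\<chi> h \<noteq> 0" using \<chi> h(1) unfolding character_on_def by force
  ultimately show ?thesis
    using \<open>\<omega> \<noteq> 0\<close> character_on_inv[OF \<chi> H h(1)] by (simp add: power_int_diff field_simps)
qed

lemma extend_character_eq:
  assumes H: "subgroup H G" and \<chi>: "character_on G H \<chi>" and g: "g \<in> carrier G"
    and compat: "\<And>k::int. g [^] k \<in> H \<Longrightarrow> \<chi> (g [^] k) = \<omega> powi k" and "\<omega> \<noteq> 0"
    and h: "h \<in> H"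
  shows "extend_character G H \<chi> g \<omega> (h \<otimes> g [^] i) = \<chi> h * \<omega> powi i"
proof -
  have "\<exists>h' i'. h' \<in> H \<and> h \<otimes> g [^] i = h' \<otimes> g [^] (i'::int) \<and>
      extend_character G H \<chi> g \<omega> (h \<otimes> g [^] i) = \<chi> h' * \<omega> powi i'"
    unfolding extend_character_def by (rule someI_ex) (use h in blast)
  then obtain h' i' where "h' \<in> H" "h \<otimes> g [^] i = h' \<otimes> g [^] (i'::int)"
    and "extend_character G H \<chi> g \<omega> (h \<otimes> g [^] i) = \<chi> h' * \<omega> powi i'"
    by blast
  then show ?thesis
    using character_adjoin_well_defined[OF H \<chi> g compat \<open>\<omega> \<noteq> 0\<close> h] by simp
qed

lemma
  assumes H: "subgroup H G" and \<chi>: "character_on G H \<chi>" and g: "g \<in> carrier G"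
    and compat: "\<And>k::int. g [^] k \<in> H \<Longrightarrow> \<chi> (g [^] k) = \<omega> powi k" and \<omega>: "cmod \<omega> = 1"
  shows character_on_extend_character: "character_on G (adjoin G H g) (extend_character G H \<chi> g \<omega>)"
    and extend_character_restrict: "\<And>h. h \<in> H \<Longrightarrow> extend_character G H \<chi> g \<omega> h = \<chi> h"
    and extend_character_generator: "extend_character G H \<chi> g \<omega> g = \<omega>"
proof -
  have "\<omega> \<noteq> 0" using \<omega> by auto
  have eq: "extend_character G H \<chi> g \<omega> (h \<otimes> g [^] i) = \<chi> h * \<omega> powi i" if "h \<in> H" for h i
    using extend_character_eq[OF H \<chi> g compat \<open>\<omega> \<noteq> 0\<close> that] by simp
  have Hc: "H \<subseteq> carrier G" using subgroup.subset[OF H] .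
  show "character_on G (adjoin G H g) (extend_character G H \<chi> g \<omega>)"
    unfolding character_on_def
  proof (intro conjI ballI)
    fix a b assume "a \<in> adjoin G H g" "b \<in> adjoin G H g"
    then obtain h i h' j where a: "a = h \<otimes> g [^] (i::int)" "h \<in> H"
      and b: "b = h' \<otimes> g [^] (j::int)" "h' \<in> H" unfolding adjoin_def by blast
    have "h \<in> carrier G" "h' \<in> carrier G" using a(2) b(2) Hc by auto
    then have "a \<otimes> b = (h \<otimes> h') \<otimes> g [^] (i + j)"
      using a b g by (simp add: int_pow_mult m_ac)
    then have "extend_character G H \<chi> g \<omega> (a \<otimes> b) = \<chi> (h \<otimes> h') * \<omega> powi (i + j)"
      using eq subgroup.m_closed[OF H a(2) b(2)] by simp
    also have "\<dots> = (\<chi> h * \<omega> powi i) * (\<chi> h' * \<omega> powi j)"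
      using \<chi> a(2) b(2) \<open>\<omega> \<noteq> 0\<close> unfolding character_on_def by (simp add: power_int_add)
    finally show "extend_character G H \<chi> g \<omega> (a \<otimes> b)
        = extend_character G H \<chi> g \<omega> a * extend_character G H \<chi> g \<omega> b"
      using a b eq by simp
  next
    fix a assume "a \<in> adjoin G H g"
    then show "cmod (extend_character G H \<chi> g \<omega> a) = 1"
      unfolding adjoin_def using eq \<chi> \<omega> unfolding character_on_def
      by (auto simp: norm_mult norm_power_int)
  qed
  show "extend_character G H \<chi> g \<omega> h = \<chi> h" if "h \<in> H" for h
    using eq[OF that, of 0] that Hc by auto
  show "extend_character G H \<chi> g \<omega> g = \<omega>"
    using eq[OF subgroup.one_closed[OF H], of 1] g character_on_one[OF \<chi> H] by simp
qed

lemma character_on_extend_to_carrier: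
  assumes fin: "finite (carrier G)"
  shows "subgroup H G \<Longrightarrow> character_on G H \<chi> \<Longrightarrow>
    \<exists>\<chi>'. character_on G (carrier G) \<chi>' \<and> (\<forall>h\<in>H. \<chi>' h = \<chi> h)"
proof (induction "card (carrier G - H)" arbitrary: H \<chi> rule: less_induct)
  case less
  show ?case
  proof (cases "H = carrier G")
    case True
    then show ?thesis using less.prems by blast
  next
    case False
    then obtain g where g: "g \<in> carrier G" "g \<notin> H" using subgroup.subset[OF less.prems(1)] by blast
    obtain d :: nat where d: "0 < d" "g [^] d \<in> H" "\<And>e. 0 < e \<Longrightarrow> e < d \<Longrightarrow> g [^] e \<notin> H"
      using exists_least_pow_in_subgroup[OF fin less.prems(1) g(1)] by blast
    have "cmod (\<chi> (g [^] d)) = 1"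
      using less.prems(2) d(2) unfolding character_on_def by blast
    then obtain \<omega> where \<omega>: "\<omega> ^ d = \<chi> (g [^] d)" "cmod \<omega> = 1"
      using exists_unimodular_root d(1) by blast
    have compat: "\<And>k::int. g [^] k \<in> H \<Longrightarrow> \<chi> (g [^] k) = \<omega> powi k"
      using character_on_int_pow_via_root[OF less.prems g(1) d \<omega>(1)] .
    let ?H' = "adjoin G H g" and ?\<chi>' = "extend_character G H \<chi> g \<omega>"
    have "card (carrier G - ?H') < card (carrier G - H)"
      using subset_adjoin[OF less.prems(1)] mem_adjoin[OF less.prems(1) g(1)] g
      by (intro psubset_card_mono) (use fin in auto)
    then obtain \<chi>'' where \<chi>'': "character_on G (carrier G) \<chi>''" "\<forall>h\<in>?H'. \<chi>'' h = ?\<chi>' h"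
      using less.hyps subgroup_adjoin[OF less.prems(1) g(1)]
        character_on_extend_character[OF less.prems g(1) compat \<omega>(2)] by blast
    moreover have "\<forall>h\<in>H. \<chi>'' h = \<chi> h"
      using \<chi>''(2) subset_adjoin[OF less.prems(1), of g]
        extend_character_restrict[OF less.prems g(1) compat \<omega>(2)] by auto
    ultimately show ?thesis by blast
  qed
qed

lemma exists_character_ne_one:
  assumes fin: "finite (carrier G)" and m: "m \<in> carrier G" "m \<noteq> \<one>"
  obtains \<chi> where "\<chi> \<in> characters G" and "\<chi> m \<noteq> 1"
proof -
  have triv: "subgroup {\<one>} G" by (rule triv_subgroup)
  obtain d :: nat where d: "0 < d" "m [^] d \<in> {\<one>}" "\<And>e. 0 < e \<Longrightarrow> e < d \<Longrightarrow> m [^] e \<notin> {\<one>}"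
    using exists_least_pow_in_subgroup[OF fin triv m(1)] by blast
  have "d \<noteq> 1" using d(2) m by auto
  then have "2 \<le> d" using d(1) by linarith
  then obtain \<omega> :: complex where \<omega>: "\<omega> ^ d = 1" "cmod \<omega> = 1" "\<omega> \<noteq> 1"
    by (rule exists_nontrivial_root_of_unity)
  have compat: "(\<lambda>_. 1) (m [^] k) = \<omega> powi k" if "m [^] (k::int) \<in> {\<one>}" for k
  proof -
    have "int d dvd k"
      using triv m(1) d(1) d(2) d(3) that by (rule int_pow_in_subgroup_dvd)
    then show ?thesis using \<omega>(1) by (auto simp: power_int_mult power_int_of_nat elim!: dvdE)
  qed
  have triv_char: "character_on G {\<one>} (\<lambda>_. 1)" unfolding character_on_def by simp
  obtain \<chi>'' where \<chi>'': "character_on G (carrier G) \<chi>''"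
    "\<forall>h\<in>adjoin G {\<one>} m. \<chi>'' h = extend_character G {\<one>} (\<lambda>_. 1) m \<omega> h"
    using character_on_extend_to_carrier[OF fin subgroup_adjoin[OF triv m(1)]
        character_on_extend_character[OF triv triv_char m(1) compat \<omega>(2)]] by blast
  then have "\<chi>'' m = \<omega>"
    using mem_adjoin[OF triv m(1)] extend_character_generator[OF triv triv_char m(1) compat \<omega>(2)]
    by simp
  show thesis
  proof
    show "(\<lambda>g. if g \<in> carrier G then \<chi>'' g else 1) \<in> characters G"
      using \<chi>''(1) unfolding characters_def character_on_def by simp
    show "(\<lambda>g. if g \<in> carrier G then \<chi>'' g else 1) m \<noteq> 1"
      using \<open>\<chi>'' m = \<omega>\<close> \<omega>(3) m(1) by simp
  qed
qed

lemma sum_characters: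
  assumes fin: "finite (carrier G)" and m: "m \<in> carrier G"
  shows "(\<Sum>\<chi>\<in>characters G. \<chi> m) = (if m = \<one> then of_nat (card (characters G)) else 0)"
proof (cases "m = \<one>")
  case True
  have "(\<Sum>\<chi>\<in>characters G. \<chi> \<one>) = (\<Sum>\<chi>\<in>characters G. 1)"
    by (rule sum.cong) (auto simp: character_one)
  then show ?thesis using True by simp
next
  case False
  obtain \<chi>0 where \<chi>0: "\<chi>0 \<in> characters G" "\<chi>0 m \<noteq> 1"
    using exists_character_ne_one[OF fin m False] by blast
  have "(\<Sum>\<chi>\<in>characters G. char_mult \<chi>0 \<chi> m) = (\<Sum>\<chi>\<in>characters G. \<chi> m)"
    by (rule sum.reindex_bij_witness[of _ "char_mult (char_inv \<chi>0)" "char_mult \<chi>0"])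
       (use \<chi>0(1) in \<open>auto simp: char_mult_char_inv_cancel_left char_mult_char_inv_cancel_right
          char_mult_in_characters char_inv_in_characters\<close>)
  then have "\<chi>0 m * (\<Sum>\<chi>\<in>characters G. \<chi> m) = (\<Sum>\<chi>\<in>characters G. \<chi> m)"
    unfolding char_mult_def by (simp add: sum_distrib_left)
  then show ?thesis using \<chi>0(2) False by (metis mult_cancel_right2)
qed

lemma card_characters:
  assumes fin: "finite (carrier G)"
  shows "card (characters G) = order G"
proof -
  have "(of_nat (order G) :: complex) =
      (\<Sum>\<chi>\<in>characters G. \<Sum>k\<in>carrier G. \<chi> k * cnj (char_one k))"
    using sum_character_mult_cnj[OF _ char_one_in_characters] finite_characters[OF fin]
      char_one_in_characters by simp
  also have "\<dots> = (\<Sum>k\<in>carrier G. \<Sum>\<chi>\<in>characters G. \<chi> k)"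
    unfolding char_one_def by (simp add: sum.swap[of _ "characters G"])
  also have "\<dots> = of_nat (card (characters G))"
    using sum_characters[OF fin] fin by simp
  finally show ?thesis by (simp only: of_nat_eq_iff)
qed

lemma sum_characters_mult_cnj:
  assumes fin: "finite (carrier G)" and k: "k \<in> carrier G" and j: "j \<in> carrier G"
  shows "(\<Sum>\<chi>\<in>characters G. \<chi> k * cnj (\<chi> j)) = (if k = j then of_nat (order G) else 0)"
proof -
  have "(\<Sum>\<chi>\<in>characters G. \<chi> k * cnj (\<chi> j)) = (\<Sum>\<chi>\<in>characters G. \<chi> (k \<otimes> inv j))"
    by (rule sum.cong) (simp_all add: character_mult character_inv k j)
  then show ?thesis
    using sum_characters[OF fin, of "k \<otimes> inv j"] card_characters[OF fin] mult_inv_eq_one_iff[OF k j]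
      k j by simp
qed

end

section \<open>Spectral decomposition of a finite abelian action\<close>

lemma sum_fun_apply: "(sum f A) x = (\<Sum>a\<in>A. f a x)"
  by (induct A rule: infinite_finite_induct) auto

locale complex_star_algebra =
  fixes st :: "'a::{real_normed_algebra,banach} \<Rightarrow> 'a" and sm :: "complex \<Rightarrow> 'a \<Rightarrow> 'a"
  assumes cstar: "cstar_algebra st sm"
begin

lemma scale_add_right: "sm c (x + y) = sm c x + sm c y"
  using cstar unfolding cstar_algebra_def by meson

lemma scale_add_left: "sm (c + d) x = sm c x + sm d x"
  using cstar unfolding cstar_algebra_def by meson

lemma scale_scale: "sm (c * d) x = sm c (sm d x)"
  using cstar unfolding cstar_algebra_def by meson

lemma scale_of_real: "sm (complex_of_real r) x = r *\<^sub>R x"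
  using cstar unfolding cstar_algebra_def by meson

lemma scale_mult_left: "sm c (x * y) = sm c x * y"
  using cstar unfolding cstar_algebra_def by meson

lemma scale_mult_right: "sm c (x * y) = x * sm c y"
  using cstar unfolding cstar_algebra_def by meson

lemma star_add: "st (x + y) = st x + st y"
  using cstar unfolding cstar_algebra_def by meson

lemma star_scale: "st (sm c x) = sm (cnj c) (st x)"
  using cstar unfolding cstar_algebra_def by meson

lemma scale_one: "sm 1 x = x"
  using scale_of_real[of 1 x] by simp

lemma scale_zero_left: "sm 0 x = 0"
  using scale_of_real[of 0 x] by simp

lemma scale_zero_right: "sm c 0 = 0"
  using scale_add_right[of c 0 0] by simp

lemma scale_commute: "sm c (sm d x) = sm d (sm c x)"
  by (metis scale_scale mult.commute)

lemma scale_sum_right: "sm c (sum f A) = (\<Sum>i\<in>A. sm c (f i))"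
  using sum_comp_morphism[of "sm c" f A] scale_zero_right scale_add_right by (simp add: o_def)

lemma scale_sum_left: "sm (sum f A) x = (\<Sum>i\<in>A. sm (f i) x)"
  using sum_comp_morphism[of "\<lambda>c. sm c x" f A] scale_zero_left scale_add_left by (simp add: o_def)

lemma scale_mult_scale: "sm c x * sm d y = sm (c * d) (x * y)"
  by (simp only: scale_scale scale_mult_right[of d x y] scale_mult_left[of c x "sm d y"])

lemma scale_cancel: "c \<noteq> 0 \<Longrightarrow> sm c x = sm c y \<Longrightarrow> x = y"
  by (metis scale_scale scale_one field_class.field_inverse)

lemma star_zero: "st 0 = 0"
  using star_add[of 0 0] by simp

lemma star_sum: "st (sum f A) = (\<Sum>i\<in>A. st (f i))"
  using sum_comp_morphism[of st f A] star_zero star_add by (simp add: o_def)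

lemma sum_constant_scale: "(\<Sum>i\<in>A. x) = sm (of_nat (card A)) x"
  using scale_of_real[of "real (card A)" x] by (simp add: sum_constant_scaleR)

end

locale abelian_cstar_action = complex_star_algebra st sm + comm_group G
  for st :: "'a::{real_normed_algebra,banach} \<Rightarrow> 'a" and sm :: "complex \<Rightarrow> 'a \<Rightarrow> 'a"
    and G :: "('g, 'm) monoid_scheme" (structure) +
  fixes \<beta> :: "'g \<Rightarrow> 'a \<Rightarrow> 'a"
  assumes finite_carrier: "finite (carrier G)"
    and action: "group_action_on G st sm \<beta>"
begin

lemma action_automorphism: "k \<in> carrier G \<Longrightarrow> star_automorphism st sm (\<beta> k)"
  using action unfolding group_action_on_def by blast

lemma action_add: "k \<in> carrier G \<Longrightarrow> \<beta> k (x + y) = \<beta> k x + \<beta> k y"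
  using action_automorphism unfolding star_automorphism_def by blast

lemma action_mult: "k \<in> carrier G \<Longrightarrow> \<beta> k (x * y) = \<beta> k x * \<beta> k y"
  using action_automorphism unfolding star_automorphism_def by blast

lemma action_scale: "k \<in> carrier G \<Longrightarrow> \<beta> k (sm c x) = sm c (\<beta> k x)"
  using action_automorphism unfolding star_automorphism_def by blast

lemma action_star: "k \<in> carrier G \<Longrightarrow> \<beta> k (st x) = st (\<beta> k x)"
  using action_automorphism unfolding star_automorphism_def by blast

lemma action_one: "\<beta> \<one> x = x"
  using action unfolding group_action_on_def by simp

lemma action_compose: "g \<in> carrier G \<Longrightarrow> h \<in> carrier G \<Longrightarrow> \<beta> (g \<otimes> h) x = \<beta> g (\<beta> h x)"
  using action unfolding group_action_on_def by simp

lemma action_zero: "k \<in> carrier G \<Longrightarrow> \<beta> k 0 = 0"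
  using action_add[of k 0 0] by simp

lemma action_sum: "k \<in> carrier G \<Longrightarrow> \<beta> k (sum f A) = (\<Sum>i\<in>A. \<beta> k (f i))"
  using sum_comp_morphism[of "\<beta> k" f A] action_zero action_add by (simp add: o_def)

lemma order_pos: "0 < order G"
  using finite_carrier order_gt_0_iff_finite by blast

text \<open>\<^term>\<open>spectral \<chi> a\<close> is \<^term>\<open>order G\<close> times the component of \<^term>\<open>a\<close> in the
  spectral subspace on which \<^term>\<open>\<beta>\<close> acts by the character \<^term>\<open>char_inv \<chi>\<close>.\<close>
definition spectral :: "('g \<Rightarrow> complex) \<Rightarrow> 'a \<Rightarrow> 'a" where
  "spectral \<chi> a = (\<Sum>k\<in>carrier G. sm (\<chi> k) (\<beta> k a))"

lemma spectral_add: "spectral \<chi> (a + b) = spectral \<chi> a + spectral \<chi> b"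
  unfolding spectral_def by (simp add: action_add scale_add_right sum.distrib)

lemma spectral_zero: "spectral \<chi> 0 = 0"
  unfolding spectral_def by (simp add: action_zero scale_zero_right)

lemma spectral_scale: "spectral \<chi> (sm c a) = sm c (spectral \<chi> a)"
  unfolding spectral_def by (simp add: action_scale scale_commute scale_sum_right)

lemma spectral_sum: "spectral \<chi> (sum f A) = (\<Sum>i\<in>A. spectral \<chi> (f i))"
  using sum_comp_morphism[of "spectral \<chi>" f A] spectral_zero spectral_add by (simp add: o_def)

lemma spectral_shift:
  assumes \<chi>: "\<chi> \<in> characters G" and l: "l \<in> carrier G"
  shows "(\<Sum>k\<in>carrier G. sm (\<chi> k) (\<beta> (l \<otimes> k) a)) = sm (cnj (\<chi> l)) (spectral \<chi> a)"
proof -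
  have "sm (cnj (\<chi> l)) (spectral \<chi> a) = (\<Sum>k\<in>carrier G. sm (cnj (\<chi> l) * \<chi> k) (\<beta> k a))"
    unfolding spectral_def by (simp add: scale_sum_right scale_scale)
  also have "\<dots> = (\<Sum>k\<in>carrier G. sm (\<chi> k) (\<beta> (l \<otimes> k) a))"
    by (rule sum.reindex_bij_witness[of _ "\<lambda>k. l \<otimes> k" "\<lambda>k. inv l \<otimes> k"])
       (use l in \<open>auto simp: m_assoc[symmetric] character_mult[OF \<chi>] character_inv[OF \<chi>]\<close>)
  finally show ?thesis by simp
qed

lemma action_spectral:
  assumes \<chi>: "\<chi> \<in> characters G" and l: "l \<in> carrier G"
  shows "\<beta> l (spectral \<chi> a) = sm (cnj (\<chi> l)) (spectral \<chi> a)"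
proof -
  have "\<beta> l (spectral \<chi> a) = (\<Sum>k\<in>carrier G. sm (\<chi> k) (\<beta> (l \<otimes> k) a))"
    unfolding spectral_def using l by (simp add: action_sum action_scale action_compose)
  then show ?thesis using spectral_shift[OF \<chi> l] by simp
qed

lemma spectral_action:
  assumes \<chi>: "\<chi> \<in> characters G" and l: "l \<in> carrier G"
  shows "spectral \<chi> (\<beta> l a) = \<beta> l (spectral \<chi> a)"
proof -
  have "spectral \<chi> (\<beta> l a) = (\<Sum>k\<in>carrier G. sm (\<chi> k) (\<beta> (l \<otimes> k) a))"
    unfolding spectral_def using l by (intro sum.cong) (simp_all add: action_compose m_comm)
  then show ?thesis using spectral_shift[OF \<chi> l] action_spectral[OF \<chi> l] by simp
qed

lemma star_spectral: "st (spectral (char_inv \<chi>) a) = spectral \<chi> (st a)"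
  unfolding spectral_def char_inv_def by (simp add: star_sum star_scale action_star)

lemma spectral_spectral:
  assumes \<chi>: "\<chi> \<in> characters G" and \<chi>': "\<chi>' \<in> characters G"
  shows "spectral \<chi> (spectral \<chi>' a) = (if \<chi> = \<chi>' then sm (of_nat (order G)) (spectral \<chi>' a) else 0)"
proof -
  have "spectral \<chi> (spectral \<chi>' a) = (\<Sum>k\<in>carrier G. sm (\<chi> k * cnj (\<chi>' k)) (spectral \<chi>' a))"
    unfolding spectral_def[of \<chi> "spectral \<chi>' a"] by (simp add: action_spectral[OF \<chi>'] scale_scale)
  also have "\<dots> = sm (\<Sum>k\<in>carrier G. \<chi> k * cnj (\<chi>' k)) (spectral \<chi>' a)"
    by (simp add: scale_sum_left)
  finally show ?thesis
    using sum_character_mult_cnj[OF \<chi> \<chi>'] by (simp add: scale_zero_left)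
qed

lemma sum_spectral: "(\<Sum>\<chi>\<in>characters G. spectral \<chi> a) = sm (of_nat (order G)) a"
proof -
  have "(\<Sum>\<chi>\<in>characters G. spectral \<chi> a) = (\<Sum>k\<in>carrier G. sm (\<Sum>\<chi>\<in>characters G. \<chi> k) (\<beta> k a))"
    unfolding spectral_def scale_sum_left by (rule sum.swap)
  also have "\<dots> = (\<Sum>k\<in>carrier G. if k = \<one> then sm (of_nat (order G)) (\<beta> k a) else 0)"
    by (rule sum.cong[OF refl])
       (simp add: sum_characters[OF finite_carrier] card_characters[OF finite_carrier] scale_zero_left)
  also have "\<dots> = sm (of_nat (order G)) a"
    using finite_carrier by (simp add: action_one)
  finally show ?thesis .
qed

lemma spectral_eq_zero_if_fixed:
  assumes \<chi>: "\<chi> \<in> characters G" and l: "l \<in> carrier G" and "\<beta> l a = a" and "\<chi> l \<noteq> 1"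
  shows "spectral \<chi> a = 0"
proof -
  have "spectral \<chi> a = sm (cnj (\<chi> l)) (spectral \<chi> a)"
    using spectral_action[OF \<chi> l, of a] action_spectral[OF \<chi> l, of a] \<open>\<beta> l a = a\<close> by simp
  then have "sm (1 - cnj (\<chi> l)) (spectral \<chi> a) = sm (1 - cnj (\<chi> l)) 0"
  proof -
    have "sm (1 - cnj (\<chi> l)) (spectral \<chi> a) + sm (cnj (\<chi> l)) (spectral \<chi> a) = spectral \<chi> a"
      using scale_add_left[of "1 - cnj (\<chi> l)" "cnj (\<chi> l)"] by (simp add: scale_one)
    with \<open>spectral \<chi> a = sm (cnj (\<chi> l)) (spectral \<chi> a)\<close> show ?thesis
      by (simp add: scale_zero_right)
  qed
  moreover have "1 - cnj (\<chi> l) \<noteq> 0" using \<open>\<chi> l \<noteq> 1\<close> by simp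
  ultimately show ?thesis by (rule scale_cancel[rotated])
qed

lemma sum_spectral_mult:
  assumes t: "t \<in> characters G"
  shows "(\<Sum>\<chi>\<in>characters G. spectral \<chi> a * spectral (char_mult (char_inv \<chi>) t) b)
         = sm (of_nat (order G)) (spectral t (a * b))"
proof -
  have "(\<Sum>\<chi>\<in>characters G. spectral \<chi> a * spectral (char_mult (char_inv \<chi>) t) b)
      = (\<Sum>\<chi>\<in>characters G. \<Sum>k\<in>carrier G. \<Sum>j\<in>carrier G.
           sm (\<chi> k * cnj (\<chi> j) * t j) (\<beta> k a * \<beta> j b))"
    unfolding spectral_def char_mult_def char_inv_def
    by (simp add: sum_product scale_mult_scale mult.assoc)
  also have "\<dots> = (\<Sum>k\<in>carrier G. \<Sum>j\<in>carrier G.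
      sm ((\<Sum>\<chi>\<in>characters G. \<chi> k * cnj (\<chi> j)) * t j) (\<beta> k a * \<beta> j b))"
    by (simp add: sum.swap[of _ "characters G"] scale_sum_left sum_distrib_right)
  also have "\<dots> = (\<Sum>k\<in>carrier G. sm (of_nat (order G) * t k) (\<beta> k a * \<beta> k b))"
  proof (rule sum.cong[OF refl])
    fix k assume k: "k \<in> carrier G"
    have "(\<Sum>j\<in>carrier G. sm ((\<Sum>\<chi>\<in>characters G. \<chi> k * cnj (\<chi> j)) * t j) (\<beta> k a * \<beta> j b))
        = (\<Sum>j\<in>carrier G. if k = j then sm (of_nat (order G) * t k) (\<beta> k a * \<beta> k b) else 0)"
      by (rule sum.cong[OF refl]) (simp add: sum_characters_mult_cnj[OF finite_carrier k] scale_zero_left)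
    then show "(\<Sum>j\<in>carrier G. sm ((\<Sum>\<chi>\<in>characters G. \<chi> k * cnj (\<chi> j)) * t j) (\<beta> k a * \<beta> j b))
        = sm (of_nat (order G) * t k) (\<beta> k a * \<beta> k b)"
      using finite_carrier k by simp
  qed
  also have "\<dots> = sm (of_nat (order G)) (spectral t (a * b))"
    unfolding spectral_def by (simp add: scale_sum_right scale_scale action_mult)
  finally show ?thesis .
qed

section \<open>The isomorphism onto the corner\<close>

definition psi_coeff :: complex where
  "psi_coeff = 1 / of_nat (order G) ^ 2"

lemma cnj_psi_coeff: "cnj psi_coeff = psi_coeff"
  unfolding psi_coeff_def by simp

lemma psi_coeff_square:
  "of_nat (order G) * (psi_coeff * psi_coeff * z) * of_nat (order G) = psi_coeff * z"
  unfolding psi_coeff_def using order_pos by (simp add: field_simps power2_eq_square)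

text \<open>The compressions of the double crossed product by p are exactly these elements
  (\<open>pL2_pR2_eq_spectral_corner\<close>); \<open>psi\<close> is the case of a constant family.\<close>
definition spectral_corner :: "(('g \<Rightarrow> complex) \<Rightarrow> 'a) \<Rightarrow> ('g \<Rightarrow> complex) \<Rightarrow> 'g \<Rightarrow> 'a" where
  "spectral_corner b = (\<lambda>\<chi> t. if \<chi> \<in> characters G \<and> t \<in> carrier G
     then sm (psi_coeff * cnj (\<chi> t)) (spectral \<chi> (b \<chi>)) else 0)"

definition psi :: "'a \<Rightarrow> ('g \<Rightarrow> complex) \<Rightarrow> 'g \<Rightarrow> 'a" where
  "psi a = spectral_corner (\<lambda>_. a)"

lemma psi_apply:
  "psi a \<chi> t = (if \<chi> \<in> characters G \<and> t \<in> carrier G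
     then sm (psi_coeff * cnj (\<chi> t)) (spectral \<chi> a) else 0)"
  unfolding psi_def spectral_corner_def by simp

lemma psi_add: "psi (a + b) = psi a + psi b"
  by (intro ext) (simp add: psi_apply spectral_add scale_add_right)

lemma psi_scale: "psi (sm c a) = scale2 sm c (psi a)"
  unfolding scale2_def cp_scale_def
  by (intro ext) (simp add: psi_apply spectral_scale scale_commute scale_zero_right)

lemma psi_star: "psi (st a) = star2 G st sm \<beta> (psi a)"
proof (intro ext)
  fix \<chi> :: "'g \<Rightarrow> complex" and s :: 'g
  show "psi (st a) \<chi> s = star2 G st sm \<beta> (psi a) \<chi> s"
  proof (cases "\<chi> \<in> characters G \<and> s \<in> carrier G")
    case True
    then have \<chi>: "\<chi> \<in> characters G" and s: "s \<in> carrier G" by auto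
    have "psi a (char_inv \<chi>) (inv s) = sm (psi_coeff * cnj (\<chi> s)) (spectral (char_inv \<chi>) a)"
      using char_inv_in_characters[OF \<chi>] s by (simp add: psi_apply char_inv_def character_inv[OF \<chi> s])
    then have "star2 G st sm \<beta> (psi a) \<chi> s
        = sm (cnj (\<chi> s) * ((psi_coeff * \<chi> s) * cnj (\<chi> s))) (spectral \<chi> (st a))"
      unfolding star2_def cp_star_def star1_def dual_action_def using \<chi> s
      by (simp add: star_scale star_spectral action_scale action_spectral[OF \<chi> s] cnj_psi_coeff
          scale_scale)
    also have "cnj (\<chi> s) * ((psi_coeff * \<chi> s) * cnj (\<chi> s)) = psi_coeff * cnj (\<chi> s)"
      using character_mult_cnj[OF \<chi>, of s] by (simp add: ac_simps)
    finally show ?thesis using \<chi> s unfolding psi_apply[of "st a" \<chi> s] by simp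
  next
    case False
    then show ?thesis
      unfolding star2_def cp_star_def star1_def dual_action_def by (auto simp: psi_apply scale_zero_right)
  qed
qed

lemma psi_mult_summand:
  assumes t: "t \<in> characters G" and s: "s \<in> carrier G"
    and \<chi>: "\<chi> \<in> characters G" and h: "h \<in> carrier G"
  defines "\<chi>' \<equiv> char_mult (char_inv \<chi>) t"
  shows "psi a \<chi> h * \<beta> h (dual_action sm \<chi> (psi b \<chi>') (inv h \<otimes> s))
    = sm (psi_coeff * psi_coeff * cnj (t s)) (spectral \<chi> a * spectral \<chi>' b)"
proof -
  have \<chi>': "\<chi>' \<in> characters G"
    unfolding \<chi>'_def using \<chi> t by (simp add: char_mult_in_characters char_inv_in_characters)
  have u: "inv h \<otimes> s \<in> carrier G" using h s by simp
  have \<chi>'_u: "cnj (\<chi> (inv h \<otimes> s)) * cnj (\<chi>' (inv h \<otimes> s)) = t h * cnj (t s)"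
  proof -
    have "cnj (\<chi> (inv h \<otimes> s)) * cnj (\<chi>' (inv h \<otimes> s))
        = cnj (t (inv h \<otimes> s)) * (cnj (\<chi> (inv h \<otimes> s)) * \<chi> (inv h \<otimes> s))"
      unfolding \<chi>'_def char_mult_def char_inv_def by (simp add: ac_simps)
    also have "\<dots> = t h * cnj (t s)"
      using character_cnj_mult[OF \<chi>] character_mult[OF t _ s, of "inv h"] character_inv[OF t h] h
      by simp
    finally show ?thesis .
  qed
  have \<chi>'_h: "cnj (\<chi>' h) = \<chi> h * cnj (t h)"
    unfolding \<chi>'_def char_mult_def char_inv_def by simp
  have "dual_action sm \<chi> (psi b \<chi>') (inv h \<otimes> s)
      = sm (cnj (\<chi> (inv h \<otimes> s)) * (psi_coeff * cnj (\<chi>' (inv h \<otimes> s)))) (spectral \<chi>' b)"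
    unfolding dual_action_def using \<chi>' u by (simp add: psi_apply scale_scale)
  also have "cnj (\<chi> (inv h \<otimes> s)) * (psi_coeff * cnj (\<chi>' (inv h \<otimes> s))) = psi_coeff * (t h * cnj (t s))"
    using \<chi>'_u by (metis mult.left_commute)
  finally have "\<beta> h (dual_action sm \<chi> (psi b \<chi>') (inv h \<otimes> s))
      = sm (psi_coeff * (t h * cnj (t s)) * cnj (\<chi>' h)) (spectral \<chi>' b)"
    using \<chi>' h by (simp add: action_scale action_spectral scale_scale)
  then have "psi a \<chi> h * \<beta> h (dual_action sm \<chi> (psi b \<chi>') (inv h \<otimes> s))
      = sm (psi_coeff * cnj (\<chi> h)) (spectral \<chi> a)
        * sm (psi_coeff * (t h * cnj (t s)) * cnj (\<chi>' h)) (spectral \<chi>' b)"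
    using \<chi> h by (simp add: psi_apply)
  also have "\<dots> = sm ((psi_coeff * psi_coeff * cnj (t s)) * ((cnj (\<chi> h) * \<chi> h) * (t h * cnj (t h))))
      (spectral \<chi> a * spectral \<chi>' b)"
    unfolding \<chi>'_h scale_mult_scale by (simp add: ac_simps)
  finally show ?thesis
    using character_cnj_mult[OF \<chi>, of h] character_mult_cnj[OF t, of h] by simp
qed

lemma psi_mult: "psi (a * b) = mult2 G sm \<beta> (psi a) (psi b)"
proof (intro ext)
  fix t :: "'g \<Rightarrow> complex" and s :: 'g
  show "psi (a * b) t s = mult2 G sm \<beta> (psi a) (psi b) t s"
  proof (cases "t \<in> characters G \<and> s \<in> carrier G")
    case True
    then have t: "t \<in> characters G" and s: "s \<in> carrier G" by auto
    let ?c = "psi_coeff * psi_coeff * cnj (t s)"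
    have "mult2 G sm \<beta> (psi a) (psi b) t s
        = (\<Sum>\<chi>\<in>characters G. \<Sum>h\<in>carrier G.
             psi a \<chi> h * \<beta> h (dual_action sm \<chi> (psi b (char_mult (char_inv \<chi>) t)) (inv h \<otimes> s)))"
      unfolding mult2_def cp_mult_def mult1_def using t s by (simp add: sum_fun_apply)
    also have "\<dots> = (\<Sum>\<chi>\<in>characters G. \<Sum>h\<in>carrier G.
        sm ?c (spectral \<chi> a * spectral (char_mult (char_inv \<chi>) t) b))"
      by (intro sum.cong refl) (simp add: psi_mult_summand t s)
    also have "\<dots> = sm (of_nat (order G) * ?c)
        (\<Sum>\<chi>\<in>characters G. spectral \<chi> a * spectral (char_mult (char_inv \<chi>) t) b)"
      by (simp add: sum_constant_scale scale_scale scale_sum_right order_def)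
    also have "\<dots> = sm (of_nat (order G) * ?c * of_nat (order G)) (spectral t (a * b))"
      by (simp add: sum_spectral_mult[OF t] scale_scale)
    also have "of_nat (order G) * ?c * of_nat (order G) = psi_coeff * cnj (t s)"
      by (rule psi_coeff_square)
    finally show ?thesis using t s unfolding psi_apply[of "a * b" t s] by simp
  next
    case False
    then show ?thesis
      unfolding mult2_def cp_mult_def mult1_def by (auto simp: psi_apply sum_fun_apply)
  qed
qed

lemma psi_coeff_nonzero: "psi_coeff \<noteq> 0"
  unfolding psi_coeff_def using order_pos by simp

lemma inj_psi: "inj psi"
proof (rule injI)
  fix a b assume eq: "psi a = psi b"
  have "spectral \<chi> a = spectral \<chi> b" if \<chi>: "\<chi> \<in> characters G" for \<chi>
  proof -
    have "psi a \<chi> \<one> = psi b \<chi> \<one>" by (simp only: eq)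
    then have "sm psi_coeff (spectral \<chi> a) = sm psi_coeff (spectral \<chi> b)"
      using \<chi> character_one[OF \<chi>] by (simp add: psi_apply)
    then show ?thesis using psi_coeff_nonzero by (rule scale_cancel[rotated])
  qed
  then have "(\<Sum>\<chi>\<in>characters G. spectral \<chi> a) = (\<Sum>\<chi>\<in>characters G. spectral \<chi> b)"
    by (rule sum.cong[OF refl])
  then have "sm (of_nat (order G)) a = sm (of_nat (order G)) b"
    unfolding sum_spectral .
  moreover have "(of_nat (order G) :: complex) \<noteq> 0" using order_pos by simp
  ultimately show "a = b" by (rule scale_cancel[rotated])
qed

definition pairing :: "(('g \<Rightarrow> complex) \<Rightarrow> 'g \<Rightarrow> 'a) \<Rightarrow> ('g \<Rightarrow> complex) \<Rightarrow> 'a" where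
  "pairing F \<chi> = (\<Sum>m\<in>carrier G. sm (\<chi> m) (F \<chi> m))"

lemma pR2_apply:
  assumes \<chi>: "\<chi> \<in> characters G" and u: "u \<in> carrier G"
  shows "pR2 G sm F \<chi> u = sm (cnj (\<chi> u) / of_nat (order G)) (pairing F \<chi>)"
proof -
  have "sm (cnj (\<chi> u) / of_nat (order G)) (pairing F \<chi>)
      = (\<Sum>m\<in>carrier G. sm (cnj (\<chi> u) / of_nat (order G) * \<chi> m) (F \<chi> m))"
    unfolding pairing_def scale_sum_right by (simp only: scale_scale)
  also have "\<dots> = (\<Sum>k\<in>carrier G. sm (cnj (\<chi> k) / of_nat (order G)) (F \<chi> (u \<otimes> inv k)))"
  proof (rule sum.reindex_bij_witness[of _ "\<lambda>k. u \<otimes> inv k" "\<lambda>m. inv m \<otimes> u"])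
    fix m assume m: "m \<in> carrier G"
    show "u \<otimes> inv (inv m \<otimes> u) = m" using m u by (simp add: inv_mult m_lcomm)
    show "inv m \<otimes> u \<in> carrier G" using m u by simp
    show "sm (cnj (\<chi> (inv m \<otimes> u)) / of_nat (order G)) (F \<chi> (u \<otimes> inv (inv m \<otimes> u)))
        = sm (cnj (\<chi> u) / of_nat (order G) * \<chi> m) (F \<chi> m)"
      using m u character_inv_mult[OF \<chi> m u] by (simp add: inv_mult m_lcomm ac_simps)
  next
    fix k assume k: "k \<in> carrier G"
    show "inv (u \<otimes> inv k) \<otimes> u = k" using k u by (simp add: inv_mult m_lcomm m_comm)
    show "u \<otimes> inv k \<in> carrier G" using k u by simp
  qed
  finally show ?thesis
    unfolding pR2_def rmul_scalars_def using u by (simp add: order_def)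
qed

lemma pL2_pR2_eq_spectral_corner:
  assumes F: "\<And>\<chi>. \<chi> \<notin> characters G \<Longrightarrow> F \<chi> = 0"
  shows "pL2 G sm \<beta> (pR2 G sm F) = spectral_corner (pairing F)"
proof (intro ext)
  fix \<chi> :: "'g \<Rightarrow> complex" and t :: 'g
  let ?n = "of_nat (order G) :: complex"
  show "pL2 G sm \<beta> (pR2 G sm F) \<chi> t = spectral_corner (pairing F) \<chi> t"
  proof (cases "\<chi> \<in> characters G \<and> t \<in> carrier G")
    case True
    then have \<chi>: "\<chi> \<in> characters G" and t: "t \<in> carrier G" by auto
    have "pL2 G sm \<beta> (pR2 G sm F) \<chi> t
        = (\<Sum>j\<in>carrier G. sm (1 / ?n) (\<beta> j (sm (cnj (\<chi> (inv j \<otimes> t)) / ?n) (pairing F \<chi>))))"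
      unfolding pL2_def pL1_def using \<chi> t by (simp add: pR2_apply order_def)
    also have "\<dots> = (\<Sum>j\<in>carrier G. sm (psi_coeff * cnj (\<chi> t)) (sm (\<chi> j) (\<beta> j (pairing F \<chi>))))"
    proof (rule sum.cong[OF refl])
      fix j assume j: "j \<in> carrier G"
      have "1 / ?n * (cnj (\<chi> (inv j \<otimes> t)) / ?n) = psi_coeff * cnj (\<chi> t) * \<chi> j"
        unfolding character_inv_mult[OF \<chi> j t] psi_coeff_def
        using character_cnj_mult[OF \<chi>, of j] by (simp add: power2_eq_square field_simps)
      then show "sm (1 / ?n) (\<beta> j (sm (cnj (\<chi> (inv j \<otimes> t)) / ?n) (pairing F \<chi>)))
          = sm (psi_coeff * cnj (\<chi> t)) (sm (\<chi> j) (\<beta> j (pairing F \<chi>)))"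
        using j by (simp only: action_scale scale_scale[symmetric])
    qed
    also have "\<dots> = spectral_corner (pairing F) \<chi> t"
      unfolding spectral_corner_def spectral_def using \<chi> t by (simp add: scale_sum_right)
    finally show ?thesis .
  next
    case False
    then show ?thesis
      unfolding pL2_def pL1_def pR2_def rmul_scalars_def spectral_corner_def
      using F by (auto simp: scale_zero_right action_zero)
  qed
qed

lemma spectral_corner_cong:
  "(\<And>\<chi>. \<chi> \<in> characters G \<Longrightarrow> spectral \<chi> (b \<chi>) = spectral \<chi> (b' \<chi>)) \<Longrightarrow>
    spectral_corner b = spectral_corner b'"
  unfolding spectral_corner_def by (intro ext) simp

lemma psi_fixed_point_in_corner:
  assumes L: "subgroup L G" and a: "a \<in> fixed_points \<beta> L"
  shows "psi a \<in> corner2 G sm \<beta> (annihilator G L)"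
proof -
  define F where "F \<chi> = (if \<chi> \<in> annihilator G L then (\<lambda>m. if m = \<one> then a else 0) else 0)" for \<chi>
  have F: "F \<in> CP2_over G (annihilator G L)"
    unfolding CP2_over_def cp_carrier_def CP1_def F_def annihilator_def by auto
  have pairing_F: "pairing F \<chi> = (if \<chi> \<in> annihilator G L then a else 0)" if "\<chi> \<in> characters G" for \<chi>
  proof (cases "\<chi> \<in> annihilator G L")
    case True
    then have "pairing F \<chi> = (\<Sum>m\<in>carrier G. if m = \<one> then sm (\<chi> m) a else 0)"
      unfolding pairing_def F_def by (intro sum.cong) (auto simp: scale_zero_right)
    then show ?thesis using True finite_carrier character_one[OF that] by (simp add: scale_one)
  next
    case False
    then show ?thesis unfolding pairing_def F_def by (simp add: scale_zero_right)
  qed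
  have "spectral \<chi> (pairing F \<chi>) = spectral \<chi> a" if \<chi>: "\<chi> \<in> characters G" for \<chi>
  proof (cases "\<chi> \<in> annihilator G L")
    case True
    then show ?thesis using pairing_F[OF \<chi>] by simp
  next
    case False
    then obtain l where l: "l \<in> L" "\<chi> l \<noteq> 1" using \<chi> unfolding annihilator_def by auto
    have "\<beta> l a = a" using a l(1) unfolding fixed_points_def by simp
    then have "spectral \<chi> a = 0"
      using spectral_eq_zero_if_fixed[OF \<chi> subgroup.mem_carrier[OF L l(1)] _ l(2)] by simp
    then show ?thesis using pairing_F[OF \<chi>] False by (simp add: spectral_zero)
  qed
  then have "psi a = pL2 G sm \<beta> (pR2 G sm F)"
    unfolding psi_def using F
    by (subst pL2_pR2_eq_spectral_corner) (auto simp: CP2_over_def cp_carrier_def intro: spectral_corner_cong)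
  then show ?thesis unfolding corner2_def using F by (rule image_eqI)
qed

definition spectral_synthesis :: "(('g \<Rightarrow> complex) \<Rightarrow> 'a) \<Rightarrow> 'a" where
  "spectral_synthesis b = sm (1 / of_nat (order G)) (\<Sum>\<chi>\<in>characters G. spectral \<chi> (b \<chi>))"

lemma spectral_spectral_synthesis:
  assumes \<chi>: "\<chi> \<in> characters G"
  shows "spectral \<chi> (spectral_synthesis b) = spectral \<chi> (b \<chi>)"
proof -
  have "spectral \<chi> (spectral_synthesis b)
      = sm (1 / of_nat (order G)) (\<Sum>\<chi>'\<in>characters G. spectral \<chi> (spectral \<chi>' (b \<chi>')))"
    unfolding spectral_synthesis_def by (simp add: spectral_scale spectral_sum)
  also have "\<dots> = sm (1 / of_nat (order G)) (sm (of_nat (order G)) (spectral \<chi> (b \<chi>)))"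
    using finite_characters[OF finite_carrier] \<chi>
    by (simp add: spectral_spectral[OF \<chi>] if_distrib cong: if_cong)
  also have "\<dots> = spectral \<chi> (b \<chi>)"
    using order_pos by (simp add: scale_scale[symmetric] scale_one)
  finally show ?thesis .
qed

lemma spectral_synthesis_fixed_point:
  assumes L: "subgroup L G"
    and b: "\<And>\<chi>. \<chi> \<in> characters G \<Longrightarrow> \<chi> \<notin> annihilator G L \<Longrightarrow> b \<chi> = 0"
  shows "spectral_synthesis b \<in> fixed_points \<beta> L"
  unfolding fixed_points_def
proof (intro CollectI ballI)
  fix l assume "l \<in> L"
  then have l: "l \<in> carrier G" using subgroup.mem_carrier[OF L] by blast
  have "\<beta> l (spectral \<chi> (b \<chi>)) = spectral \<chi> (b \<chi>)" if \<chi>: "\<chi> \<in> characters G" for \<chi>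
  proof (cases "\<chi> \<in> annihilator G L")
    case True
    then have "\<chi> l = 1" using \<open>l \<in> L\<close> unfolding annihilator_def by auto
    then show ?thesis using action_spectral[OF \<chi> l] by (simp add: scale_one)
  next
    case False
    then show ?thesis using b[OF \<chi>] by (simp add: spectral_zero action_zero[OF l])
  qed
  then show "\<beta> l (spectral_synthesis b) = spectral_synthesis b"
    unfolding spectral_synthesis_def using l by (simp add: action_scale action_sum)
qed

lemma corner_in_psi_fixed_points:
  assumes L: "subgroup L G" and F: "F \<in> CP2_over G (annihilator G L)"
  shows "pL2 G sm \<beta> (pR2 G sm F) \<in> psi ` fixed_points \<beta> L"
proof -
  have F_chars: "\<And>\<chi>. \<chi> \<notin> characters G \<Longrightarrow> F \<chi> = 0"
    using F unfolding CP2_over_def cp_carrier_def by blast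
  have "\<And>\<chi>. \<chi> \<notin> annihilator G L \<Longrightarrow> pairing F \<chi> = 0"
    using F unfolding CP2_over_def pairing_def by (simp add: scale_zero_right)
  then have fixed: "spectral_synthesis (pairing F) \<in> fixed_points \<beta> L"
    using spectral_synthesis_fixed_point[OF L] by blast
  have "pL2 G sm \<beta> (pR2 G sm F) = spectral_corner (pairing F)"
    using F_chars by (rule pL2_pR2_eq_spectral_corner)
  also have "\<dots> = psi (spectral_synthesis (pairing F))"
    unfolding psi_def by (rule spectral_corner_cong) (simp add: spectral_spectral_synthesis)
  finally show ?thesis using fixed by (rule image_eqI)
qed

lemma psi_image_fixed_points:
  assumes "subgroup L G"
  shows "psi ` fixed_points \<beta> L = corner2 G sm \<beta> (annihilator G L)"
  using psi_fixed_point_in_corner[OF assms] corner_in_psi_fixed_points[OF assms]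
  unfolding corner2_def by blast

lemma fixed_points_trivial_subgroup: "fixed_points \<beta> {\<one>} = UNIV"
  unfolding fixed_points_def by (simp add: action_one)

lemma corner2_char_one: "corner2 G sm \<beta> {char_one} = embed2 ` corner1 G sm \<beta>"
proof -
  have CP2: "CP2_over G {char_one} = embed2 ` CP1 G"
  proof
    show "CP2_over G {char_one} \<subseteq> embed2 ` CP1 G"
    proof
      fix F assume F: "F \<in> CP2_over G {char_one}"
      have "F = embed2 (F char_one)"
        using F unfolding embed2_def CP2_over_def by (intro ext) auto
      moreover have "F char_one \<in> CP1 G"
        using F char_one_in_characters unfolding CP2_over_def cp_carrier_def by blast
      ultimately show "F \<in> embed2 ` CP1 G" by blast
    qed
    show "embed2 ` CP1 G \<subseteq> CP2_over G {char_one}"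
      unfolding CP2_over_def cp_carrier_def embed2_def CP1_def using char_one_in_characters by auto
  qed
  have "pL2 G sm \<beta> (pR2 G sm (embed2 f)) \<chi> = embed2 (pL1 G sm \<beta> (pR1 G sm f)) \<chi>" for f \<chi>
  proof (cases "\<chi> = char_one")
    case True
    then show ?thesis unfolding pL2_def pR2_def embed2_def pR1_def by (simp add: char_one_def)
  next
    case False
    then have "pR2 G sm (embed2 f) \<chi> = 0"
      unfolding pR2_def rmul_scalars_def embed2_def by (intro ext) (simp add: scale_zero_right)
    then have "pL2 G sm \<beta> (pR2 G sm (embed2 f)) \<chi> = 0"
      unfolding pL2_def pL1_def by (intro ext) (simp add: scale_zero_right action_zero)
    then show ?thesis using False unfolding embed2_def by simp
  qed
  then have "pL2 G sm \<beta> (pR2 G sm (embed2 f)) = embed2 (pL1 G sm \<beta> (pR1 G sm f))" for f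
    by (rule ext)
  then show ?thesis
    unfolding corner2_def corner1_def CP2 image_image by simp
qed

end

lemma (in group) annihilator_trivial_subgroup: "annihilator G {\<one>} = characters G"
  unfolding annihilator_def by (auto simp: character_one)

lemma (in group) annihilator_carrier: "annihilator G (carrier G) = {char_one}"
proof -
  have "\<chi> = char_one" if "\<chi> \<in> characters G" and "\<forall>g\<in>carrier G. \<chi> g = 1" for \<chi>
  proof
    fix g show "\<chi> g = char_one g"
      using that character_outside[of \<chi> g] unfolding char_one_def by (cases "g \<in> carrier G") auto
  qed
  moreover have "char_one \<in> annihilator G (carrier G)"
    unfolding annihilator_def using char_one_in_characters by (simp add: char_one_def)
  ultimately show ?thesis
    unfolding annihilator_def by blast
qed

theorem proposition3p1:
  fixes G :: "('g, 'm) monoid_scheme"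
    and st :: "'a::{real_normed_algebra,banach} \<Rightarrow> 'a"
    and sm :: "complex \<Rightarrow> 'a \<Rightarrow> 'a"
    and \<beta> :: "'g \<Rightarrow> 'a \<Rightarrow> 'a"
  assumes "cstar_algebra st sm"
    and "comm_group G"
    and "finite (carrier G)"
    and "group_action_on G st sm \<beta>"
  shows "\<exists>\<psi>. star_iso_onto G st sm \<beta> \<psi> (corner2 G sm \<beta> (characters G)) \<and>
             \<psi> ` fixed_points \<beta> (carrier G) = embed2 ` corner1 G sm \<beta> \<and>
             (\<forall>L. subgroup L G \<longrightarrow>
                \<psi> ` fixed_points \<beta> L = corner2 G sm \<beta> (annihilator G L))"
proof -
  interpret abelian_cstar_action st sm G \<beta>
    using assms by (simp add: abelian_cstar_action_def abelian_cstar_action_axioms_def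
      complex_star_algebra_def)
  have "psi ` UNIV = corner2 G sm \<beta> (characters G)"
    using psi_image_fixed_points[OF triv_subgroup]
    by (simp add: fixed_points_trivial_subgroup annihilator_trivial_subgroup)
  then have "star_iso_onto G st sm \<beta> psi (corner2 G sm \<beta> (characters G))"
    unfolding star_iso_onto_def bij_betw_def
    using inj_psi psi_add psi_scale psi_mult psi_star by simp
  moreover have "psi ` fixed_points \<beta> (carrier G) = embed2 ` corner1 G sm \<beta>"
    using psi_image_fixed_points[OF subgroup_self]
    by (simp add: annihilator_carrier corner2_char_one)
  ultimately show ?thesis using psi_image_fixed_points by blast
qed

end
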